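(* Let $b>0$ and let $A_1,\dots,A_n$ and $L_1,\dots,L_n$ be finite linear orders, with $A_1,\dots,A_n$ non-empty. There is a finite linear order $I$ with the following property. Consider a coloring with $b$ colors of all $n$-tuples $(s_1,\dots,s_n)$ such that (i) $s_1\colon A_1\oplus (L_1\times I)^y\to A_1\oplus 1$, for some $y\in L_1\times I$, is a sealed $A_1$-rigid surjection, and (ii) for $2\leq i\leq n$, $s_i\colon A_i\oplus (L_i\times I)\to A_i$ is an $A_i$-rigid surjection. Then there exist functions $p_i\colon A_i\oplus (L_i\times I)\to A_i\oplus L_i$, $1\leq i\leq n$, each with property (P) (for $A=A_i$, $L=L_i$), such that for each $x\in L_1$, each sealed $A_1$-rigid surjection $r_1\colon A_1\oplus L_1^x\to A_1\oplus 1$ and all $A_i$-rigid surjections $r_i\colon A_i\oplus L_i\to A_i$, $2\leq i\leq n$, the color of \[ (r_1\circ p_1^x,\ r_2\circ p_2,\ \dots,\ r_n\circ p_n) \] depends only on $x$.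
   Context: For linear orders $A$ and $L$, $A\oplus L$ is the linear order on the disjoint union with $L$ placed on top of $A$; $A\oplus 1$ is $A$ with one new top element added. $L\times I$ carries the lexicographic order. For a linear order $J$ and $x\in J$, $J^x=\{y\in J\mid y\leq_J x\}$. A function $p\colon A\oplus(L\times I)\to A\oplus L$ has property (P) if $p\upharpoonright A={\rm id}_A$ and for every $x\in L$, $x\in p[\{x\}\times I]\subseteq A\cup\{x\}$. For such $p$ and $x\in L$, $p^x$ denotes the restriction of $p$ to $\{z\in A\oplus(L\times I)\mid z\leq \min p^{-1}(x)\}$. An $A$-rigid surjection from $A\oplus J$ to $A$ (with $J$ a linear order) is any function that is the identity on $A$. A sealed $A$-rigid surjection from $A\oplus J^x$ to $A\oplus 1$ is a function that is the identity on $A$, maps $x$ (the largest element) to the top element of $A\oplus 1$, and maps all other elements of $J^x$ into $A$. *)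

theory Defs
  imports Main
begin

text \<open>
A finite linear order of size k is represented by
{0..<k} with the usual order (every finite linear order is isomorphic to one).
For |A| = a and a linear order J of size k, A \<oplus> J is {0..<a+k}: the elements
of A are 0..<a and the element j of J is a+j.  A \<oplus> 1 is {0..<a+1}, with top a.
For |L| = l and |I| = m, L \<times> I (lexicographic) is encoded by (x,i) \<mapsto> x*m+i,
so A \<oplus> (L \<times> I) is {0..<a+l*m} and (x,i) is the element a+x*m+i.
For y in a linear order J (encoded as {0..<k}), J^y = {0..y}, so
A \<oplus> J^y is {0..a+y} with largest element a+y.
Functions are partial maps whose domain is exactly the intended domain.
\<close>

text \<open>A-rigid surjection from A \<oplus> J to A (|A| = a, |J| = k).\<close>
definition rigid_surj :: "nat \<Rightarrow> nat \<Rightarrow> (nat \<rightharpoonup> nat) \<Rightarrow> bool" where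
  "rigid_surj a k f \<longleftrightarrow>
     dom f = {..<a+k} \<and> (\<forall>z<a. f z = Some z) \<and>
     (\<forall>z. a \<le> z \<and> z < a+k \<longrightarrow> (\<exists>w<a. f z = Some w))"

text \<open>Sealed A-rigid surjection from A \<oplus> J^y to A \<oplus> 1 (|A| = a, y \<in> J).\<close>
definition sealed_rigid_surj :: "nat \<Rightarrow> nat \<Rightarrow> (nat \<rightharpoonup> nat) \<Rightarrow> bool" where
  "sealed_rigid_surj a y f \<longleftrightarrow>
     dom f = {..a+y} \<and> (\<forall>z<a. f z = Some z) \<and> f (a+y) = Some a \<and>
     (\<forall>z. a \<le> z \<and> z < a+y \<longrightarrow> (\<exists>w<a. f z = Some w))"

text \<open>Property (P) for p : A \<oplus> (L \<times> I) \<rightarrow> A \<oplus> L, with |A| = a, |L| = l, |I| = m.\<close>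
definition propP :: "nat \<Rightarrow> nat \<Rightarrow> nat \<Rightarrow> (nat \<rightharpoonup> nat) \<Rightarrow> bool" where
  "propP a l m p \<longleftrightarrow>
     dom p = {..<a+l*m} \<and> (\<forall>z<a. p z = Some z) \<and>
     (\<forall>x<l. (\<exists>i<m. p (a + x*m + i) = Some (a+x)) \<and>
            (\<forall>i<m. \<exists>w. p (a + x*m + i) = Some w \<and> (w < a \<or> w = a+x)))"

text \<open>p^x: restriction of p to the elements \<le> min p^{-1}(x), for x \<in> L (encoded a+x).\<close>
definition p_up :: "nat \<Rightarrow> (nat \<rightharpoonup> nat) \<Rightarrow> nat \<Rightarrow> (nat \<rightharpoonup> nat)" where
  "p_up a p x = p |` {..(LEAST z. p z = Some (a+x))}"

text \<open>Tuples (s_1,...,s_n) to be colored: as = [|A_1|,...,|A_n|], ls = [|L_1|,...,|L_n|],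
  m = |I|; index 0 of the list corresponds to index 1 of the paper.\<close>
definition admissible :: "nat list \<Rightarrow> nat list \<Rightarrow> nat \<Rightarrow> (nat \<rightharpoonup> nat) list \<Rightarrow> bool" where
  "admissible as ls m s \<longleftrightarrow>
     length s = length as \<and>
     (\<exists>y < ls!0 * m. sealed_rigid_surj (as!0) y (s!0)) \<and>
     (\<forall>i. 1 \<le> i \<and> i < length as \<longrightarrow> rigid_surj (as!i) (ls!i * m) (s!i))"

end

theory Submission
  imports Defs "HOL-Library.FuncSet"
begin

text \<open>
  A map with property (P) is coded by one combinatorial line over the alphabet \<open>A\<^sub>i\<close> for each
  element \<open>x\<close> of \<open>L\<^sub>i\<close>, the word of length \<open>|I|\<close> describing \<open>p\<^sub>i\<close> on \<open>{x} \<times> I\<close>: the variable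
  positions go to \<open>x\<close>, the others to the fixed letters. Composing with \<open>r\<^sub>i\<close> substitutes the letter
  \<open>r\<^sub>i(x)\<close> into the variable positions, so the tuple \<open>(r\<^sub>1 \<circ> p\<^sub>1\<^sup>x, r\<^sub>2 \<circ> p\<^sub>2, \<dots>, r\<^sub>n \<circ> p\<^sub>n)\<close> is
  coded by a point of the product of all these lines, the first map being sealed at the first
  variable position of the line for \<open>x \<in> L\<^sub>1\<close>. Ordering the coordinates so that the lines for
  \<open>L\<^sub>1\<close> come last, the color of this tuple depends only on the coordinates before \<open>x\<close> and on
  the letters of coordinate \<open>x\<close> before the seal.

  It therefore suffices to find lines on whose product each such prefix-determined coloring is
  constant. This product version of the Hales--Jewett theorem is proved by adding one coordinate at
  a time: lines for the new coordinate come from Hales--Jewett applied to the finitely many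
  colorings indexed by the points of the earlier coordinates, and the color seen at the new
  coordinate is folded into the coloring handed down to the earlier ones. The Hales--Jewett
  theorem itself is proved by the classical color-focusing induction on the alphabet size.
\<close>

section \<open>The Hales--Jewett theorem\<close>

text \<open>Words of length \<open>N\<close> over the alphabet \<open>{0..<k}\<close> are functions vanishing from \<open>N\<close> on.\<close>
definition words :: "nat \<Rightarrow> nat \<Rightarrow> (nat \<Rightarrow> nat) set" where
  "words k N = {w. (\<forall>i<N. w i < k) \<and> (\<forall>i. N \<le> i \<longrightarrow> w i = 0)}"

definition line_point :: "(nat \<Rightarrow> nat) \<Rightarrow> nat set \<Rightarrow> nat \<Rightarrow> nat \<Rightarrow> nat" where
  "line_point w S t = (\<lambda>i. if i \<in> S then t else w i)"

definition comb_line :: "nat \<Rightarrow> nat \<Rightarrow> (nat \<Rightarrow> nat) \<Rightarrow> nat set \<Rightarrow> bool" where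
  "comb_line k N w S \<longleftrightarrow> w \<in> words k N \<and> S \<subseteq> {..<N} \<and> S \<noteq> {}"

definition monochromatic_line :: "((nat \<Rightarrow> nat) \<Rightarrow> 'c) \<Rightarrow> nat \<Rightarrow> (nat \<Rightarrow> nat) \<Rightarrow> nat set \<Rightarrow> bool" where
  "monochromatic_line \<chi> k w S \<longleftrightarrow> (\<forall>t<k. \<chi> (line_point w S t) = \<chi> (line_point w S 0))"

definition concat_word :: "nat \<Rightarrow> (nat \<Rightarrow> nat) \<Rightarrow> (nat \<Rightarrow> nat) \<Rightarrow> nat \<Rightarrow> nat" where
  "concat_word n v u = (\<lambda>i. if i < n then v i else u (i - n))"

definition hales_jewett :: "nat \<Rightarrow> bool" where
  "hales_jewett k \<longleftrightarrow> (\<forall>r. \<exists>N. \<forall>\<chi>. (\<forall>w\<in>words k N. \<chi> w < (r::nat)) \<longrightarrow>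
      (\<exists>w S. comb_line k N w S \<and> monochromatic_line \<chi> k w S))"

lemma finite_words: "finite (words k N)"
proof -
  have "words k N \<subseteq> (\<lambda>f i. if i < N then f i else 0) ` ({..<N} \<rightarrow>\<^sub>E {..<k})"
  proof
    fix w assume w: "w \<in> words k N"
    then have "w = (\<lambda>i. if i < N then restrict w {..<N} i else 0)"
      by (auto simp: words_def)
    moreover have "restrict w {..<N} \<in> {..<N} \<rightarrow>\<^sub>E {..<k}"
      using w by (auto simp: words_def)
    ultimately show "w \<in> (\<lambda>f i. if i < N then f i else 0) ` ({..<N} \<rightarrow>\<^sub>E {..<k})"
      by blast
  qed
  then show ?thesis by (rule finite_subset) (auto intro: finite_PiE)
qed

lemma words_mono: "k \<le> K \<Longrightarrow> words k N \<subseteq> words K N"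
  unfolding words_def by fastforce

lemma letter_less_alphabet: "w \<in> words k N \<Longrightarrow> 0 < k \<Longrightarrow> w i < k"
  unfolding words_def by (cases "i < N") auto

lemma zero_in_words: "0 < k \<Longrightarrow> (\<lambda>_. 0) \<in> words k N"
  unfolding words_def by auto

lemma concat_word_in_words: "v \<in> words k n \<Longrightarrow> u \<in> words k m \<Longrightarrow> concat_word n v u \<in> words k (n + m)"
  unfolding words_def concat_word_def by auto

lemma line_point_in_words: "comb_line k N w S \<Longrightarrow> t < k \<Longrightarrow> line_point w S t \<in> words k N"
  unfolding comb_line_def words_def line_point_def by auto

lemma comb_line_mono: "comb_line k N w S \<Longrightarrow> k \<le> K \<Longrightarrow> comb_line K N w S"
  unfolding comb_line_def using words_mono by blast

lemma line_point_concat_left: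
  "S \<subseteq> {..<n} \<Longrightarrow> line_point (concat_word n v u) S t = concat_word n (line_point v S t) u"
  unfolding line_point_def concat_word_def by (rule ext) auto

lemma line_point_concat:
  "S \<subseteq> {..<n} \<Longrightarrow> line_point (concat_word n v u) (S \<union> (+) n ` S') t
     = concat_word n (line_point v S t) (line_point u S' t)"
  unfolding line_point_def concat_word_def
  by (rule ext) (auto simp: image_iff; metis add_diff_inverse_nat)

lemma comb_line_concat:
  "v \<in> words k n \<Longrightarrow> S \<subseteq> {..<n} \<Longrightarrow> comb_line k m u S' \<Longrightarrow>
     comb_line k (n + m) (concat_word n v u) (S \<union> (+) n ` S')"
  unfolding comb_line_def using concat_word_in_words[of v k n u m] by auto

lemma monochromatic_line_concat_left:
  assumes "comb_line K n w S" "u \<in> words K m" "monochromatic_line (\<lambda>v. \<chi> (concat_word n v u)) k w S"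
  shows "comb_line K (n + m) (concat_word n w u) S \<and> monochromatic_line \<chi> k (concat_word n w u) S"
proof
  show "comb_line K (n + m) (concat_word n w u) S"
    using assms(1,2) concat_word_in_words[of w K n u m] unfolding comb_line_def by auto
  have S: "S \<subseteq> {..<n}"
    using assms(1) unfolding comb_line_def by blast
  show "monochromatic_line \<chi> k (concat_word n w u) S"
    using assms(3) unfolding monochromatic_line_def line_point_concat_left[OF S] .
qed

lemma hales_jewett_finite_range:
  assumes "hales_jewett k"
  shows "\<exists>N. \<forall>\<chi> :: (nat \<Rightarrow> nat) \<Rightarrow> 'c. card (\<chi> ` words k N) \<le> r \<longrightarrow>
      (\<exists>w S. comb_line k N w S \<and> monochromatic_line \<chi> k w S)"
proof -
  obtain N where N: "\<And>\<chi>. \<forall>w\<in>words k N. \<chi> w < r \<Longrightarrow>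
      \<exists>w S. comb_line k N w S \<and> monochromatic_line \<chi> k w S"
    using assms unfolding hales_jewett_def by blast
  show ?thesis
  proof (rule exI[of _ N], intro allI impI)
    fix \<chi> :: "(nat \<Rightarrow> nat) \<Rightarrow> 'c"
    assume card: "card (\<chi> ` words k N) \<le> r"
    obtain f :: "'c \<Rightarrow> nat" and n where f: "f ` \<chi> ` words k N = {i. i < n}" "inj_on f (\<chi> ` words k N)"
      using finite_imp_inj_to_nat_seg[of "\<chi> ` words k N"] finite_words by blast
    have "n \<le> r" using card f card_image[OF f(2)] by simp
    moreover have "f (\<chi> w) < n" if "w \<in> words k N" for w
      using that f(1) by blast
    ultimately have "\<forall>w\<in>words k N. (f \<circ> \<chi>) w < r" by fastforce
    then obtain w S where L: "comb_line k N w S" "monochromatic_line (f \<circ> \<chi>) k w S"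
      using N by blast
    have "monochromatic_line \<chi> k w S"
      unfolding monochromatic_line_def
    proof (intro allI impI)
      fix t assume "t < k"
      moreover have "line_point w S t \<in> words k N" "line_point w S 0 \<in> words k N"
        using line_point_in_words[OF L(1)] \<open>t < k\<close> by auto
      ultimately show "\<chi> (line_point w S t) = \<chi> (line_point w S 0)"
        using L(2) f(2) unfolding monochromatic_line_def by (auto dest: inj_onD)
    qed
    with L(1) show "\<exists>w S. comb_line k N w S \<and> monochromatic_line \<chi> k w S" by blast
  qed
qed

text \<open>Apply the theorem to the coloring whose values are the tuples of colors.\<close>
lemma hales_jewett_family:
  assumes "hales_jewett k" and "finite V"
  shows "\<exists>N. \<forall>\<chi> :: 'v \<Rightarrow> (nat \<Rightarrow> nat) \<Rightarrow> nat. (\<forall>v\<in>V. \<forall>u\<in>words k N. \<chi> v u < r) \<longrightarrow>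
      (\<exists>w S. comb_line k N w S \<and> (\<forall>v\<in>V. monochromatic_line (\<chi> v) k w S))"
proof -
  obtain N where N: "\<And>\<chi> :: (nat \<Rightarrow> nat) \<Rightarrow> ('v \<Rightarrow> nat). card (\<chi> ` words k N) \<le> card (V \<rightarrow>\<^sub>E {..<r}) \<Longrightarrow>
      \<exists>w S. comb_line k N w S \<and> monochromatic_line \<chi> k w S"
    using hales_jewett_finite_range[OF assms(1)] by blast
  show ?thesis
  proof (rule exI[of _ N], intro allI impI)
    fix \<chi> :: "'v \<Rightarrow> (nat \<Rightarrow> nat) \<Rightarrow> nat"
    assume bound: "\<forall>v\<in>V. \<forall>u\<in>words k N. \<chi> v u < r"
    define \<chi>' where "\<chi>' u = restrict (\<lambda>v. \<chi> v u) V" for u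
    have "\<chi>' ` words k N \<subseteq> V \<rightarrow>\<^sub>E {..<r}"
      using bound unfolding \<chi>'_def by auto
    then have "card (\<chi>' ` words k N) \<le> card (V \<rightarrow>\<^sub>E {..<r})"
      using assms(2) by (intro card_mono finite_PiE) auto
    then obtain w S where L: "comb_line k N w S" "monochromatic_line \<chi>' k w S"
      using N by blast
    moreover have "\<forall>v\<in>V. monochromatic_line (\<chi> v) k w S"
      using L(2) unfolding monochromatic_line_def \<chi>'_def by (metis restrict_apply')
    ultimately show "\<exists>w S. comb_line k N w S \<and> (\<forall>v\<in>V. monochromatic_line (\<chi> v) k w S)"
      by blast
  qed
qed

definition color_focused ::
    "((nat \<Rightarrow> nat) \<Rightarrow> 'c) \<Rightarrow> nat \<Rightarrow> nat \<Rightarrow> nat \<Rightarrow> (nat \<Rightarrow> nat)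
       \<Rightarrow> (nat \<Rightarrow> nat \<Rightarrow> nat) \<Rightarrow> (nat \<Rightarrow> nat set) \<Rightarrow> bool" where
  "color_focused \<chi> k N s f LW LS \<longleftrightarrow> f \<in> words (Suc k) N \<and>
     (\<forall>i<s. comb_line (Suc k) N (LW i) (LS i) \<and> line_point (LW i) (LS i) k = f \<and>
            monochromatic_line \<chi> k (LW i) (LS i)) \<and>
     inj_on (\<lambda>i. \<chi> (line_point (LW i) (LS i) 0)) {..<s}"

lemma monochromatic_line_of_focus:
  assumes "color_focused \<chi> k N s f LW LS" "i < s" "\<chi> f = \<chi> (line_point (LW i) (LS i) 0)"
  shows "comb_line (Suc k) N (LW i) (LS i) \<and> monochromatic_line \<chi> (Suc k) (LW i) (LS i)"
proof -
  have L: "comb_line (Suc k) N (LW i) (LS i)" "line_point (LW i) (LS i) k = f"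
    "monochromatic_line \<chi> k (LW i) (LS i)"
    using assms(1,2) unfolding color_focused_def by blast+
  have "\<chi> (line_point (LW i) (LS i) t) = \<chi> (line_point (LW i) (LS i) 0)" if "t < Suc k" for t
  proof (cases "t = k")
    case True
    then show ?thesis
      using L(2) assms(3) by simp
  next
    case False
    then show ?thesis
      using L(3)[unfolded monochromatic_line_def, rule_format, of t] that by simp
  qed
  with L(1) show ?thesis
    unfolding monochromatic_line_def by blast
qed

lemma monochromatic_line_concat:
  assumes v: "v \<in> words (Suc k) n" and S: "S \<subseteq> {..<n}"
    and mono_v: "monochromatic_line (\<lambda>v. \<chi> (concat_word n v (line_point u S' 0))) k v S"
    and mono_u: "\<forall>v\<in>words (Suc k) n. monochromatic_line (\<lambda>u. \<chi> (concat_word n v u)) k u S'"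
  shows "monochromatic_line \<chi> k (concat_word n v u) (S \<union> (+) n ` S')"
  unfolding monochromatic_line_def line_point_concat[OF S]
proof (intro allI impI)
  fix t assume t: "t < k"
  have "line_point v S t \<in> words (Suc k) n"
    using v S t unfolding words_def line_point_def by auto
  then have "\<chi> (concat_word n (line_point v S t) (line_point u S' t))
      = \<chi> (concat_word n (line_point v S t) (line_point u S' 0))"
    using bspec[OF mono_u, unfolded monochromatic_line_def, rule_format, OF _ t] by blast
  also have "\<dots> = \<chi> (concat_word n (line_point v S 0) (line_point u S' 0))"
    using mono_v[unfolded monochromatic_line_def, rule_format, OF t] .
  finally show "\<chi> (concat_word n (line_point v S t) (line_point u S' t))
      = \<chi> (concat_word n (line_point v S 0) (line_point u S' 0))" .
qed

lemma color_focused_extend: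
  assumes foc: "color_focused (\<lambda>v. \<chi> (concat_word n v M0)) k n s f LW LS"
    and M: "comb_line (Suc k) m wM SM"
    and M_mono: "\<forall>v\<in>words (Suc k) n. monochromatic_line (\<lambda>u. \<chi> (concat_word n v u)) k wM SM"
    and M0: "M0 = line_point wM SM 0"
    and new: "\<forall>i<s. \<chi> (concat_word n f M0) \<noteq> \<chi> (concat_word n (line_point (LW i) (LS i) 0) M0)"
  shows "\<exists>LW' LS'. color_focused \<chi> k (n + m) (Suc s) (concat_word n f (line_point wM SM k)) LW' LS'"
proof -
  txt \<open>Add the degenerate line \<open>(f, {})\<close> as number \<open>s\<close>, then extend every line by \<open>(wM, SM)\<close>.\<close>
  define V where "V = LW(s := f)"
  define T where "T = LS(s := {})"
  have f: "f \<in> words (Suc k) n"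
    using foc unfolding color_focused_def by blast
  have "V i \<in> words (Suc k) n \<and> T i \<subseteq> {..<n} \<and> line_point (V i) (T i) k = f \<and>
      monochromatic_line (\<lambda>v. \<chi> (concat_word n v M0)) k (V i) (T i)" if "i < Suc s" for i
  proof (cases "i = s")
    case True
    then show ?thesis
      using f unfolding V_def T_def monochromatic_line_def line_point_def by simp
  next
    case False
    then show ?thesis
      using foc that unfolding color_focused_def comb_line_def V_def T_def by auto
  qed
  then have V: "V i \<in> words (Suc k) n" "T i \<subseteq> {..<n}" "line_point (V i) (T i) k = f"
    "monochromatic_line (\<lambda>v. \<chi> (concat_word n v M0)) k (V i) (T i)" if "i < Suc s" for i
    using that by blast+
  have point: "line_point (concat_word n (V i) wM) (T i \<union> (+) n ` SM) t
      = concat_word n (line_point (V i) (T i) t) (line_point wM SM t)" if "i < Suc s" for i t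
    using line_point_concat[OF V(2)[OF that]] .
  have "inj_on (\<lambda>i. \<chi> (concat_word n (line_point (V i) (T i) 0) M0)) {..<Suc s}"
    using foc new unfolding color_focused_def V_def T_def lessThan_Suc
    by (auto simp: inj_on_def line_point_def)
  moreover have "inj_on (\<lambda>i. \<chi> (line_point (concat_word n (V i) wM) (T i \<union> (+) n ` SM) 0)) {..<Suc s}
      = inj_on (\<lambda>i. \<chi> (concat_word n (line_point (V i) (T i) 0) M0)) {..<Suc s}"
    using point M0 by (intro inj_on_cong) simp
  moreover have "concat_word n f (line_point wM SM k) \<in> words (Suc k) (n + m)"
    using concat_word_in_words[OF f line_point_in_words[OF M]] by simp
  ultimately show ?thesis
    unfolding color_focused_def using V point comb_line_concat[OF V(1,2) M]
      monochromatic_line_concat[OF V(1,2) _ M_mono] M0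
    by (intro exI[of _ "\<lambda>i. concat_word n (V i) wM"] exI[of _ "\<lambda>i. T i \<union> (+) n ` SM"]) auto
qed

lemma hales_jewett_focusing:
  assumes HJ: "hales_jewett k"
  shows "\<exists>N. \<forall>\<chi>. (\<forall>w\<in>words (Suc k) N. \<chi> w < (r::nat)) \<longrightarrow>
     (\<exists>w S. comb_line (Suc k) N w S \<and> monochromatic_line \<chi> (Suc k) w S) \<or>
     (\<exists>f LW LS. color_focused \<chi> k N s f LW LS)"
proof (induction s)
  case 0
  show ?case
    unfolding color_focused_def using zero_in_words[of "Suc k" 0] by auto
next
  case (Suc s)
  then obtain n where IH: "\<And>\<chi>. \<forall>w\<in>words (Suc k) n. \<chi> w < r \<Longrightarrow>
     (\<exists>w S. comb_line (Suc k) n w S \<and> monochromatic_line \<chi> (Suc k) w S) \<or>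
     (\<exists>f LW LS. color_focused \<chi> k n s f LW LS)" by blast
  from hales_jewett_family[OF HJ finite_words[of "Suc k" n], of r]
  obtain m where HM: "\<forall>\<chi>. (\<forall>v\<in>words (Suc k) n. \<forall>u\<in>words k m. \<chi> v u < r) \<longrightarrow>
      (\<exists>w S. comb_line k m w S \<and> (\<forall>v\<in>words (Suc k) n. monochromatic_line (\<chi> v) k w S))"
    by (rule exE)
  show ?case
  proof (rule exI[of _ "n + m"], intro allI impI)
    fix \<chi> :: "(nat \<Rightarrow> nat) \<Rightarrow> nat"
    assume bound: "\<forall>w\<in>words (Suc k) (n + m). \<chi> w < r"
    have "\<forall>v\<in>words (Suc k) n. \<forall>u\<in>words k m. \<chi> (concat_word n v u) < r"
    proof (intro ballI)
      fix v u assume v: "v \<in> words (Suc k) n" and "u \<in> words k m"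
      then have "u \<in> words (Suc k) m"
        using words_mono[of k "Suc k" m] by auto
      then show "\<chi> (concat_word n v u) < r"
        using bound concat_word_in_words[OF v] by blast
    qed
    then obtain wM SM where M: "comb_line k m wM SM"
      and M_mono: "\<forall>v\<in>words (Suc k) n. monochromatic_line (\<lambda>u. \<chi> (concat_word n v u)) k wM SM"
      using HM[rule_format, of "\<lambda>v u. \<chi> (concat_word n v u)"] by blast
    have M': "comb_line (Suc k) m wM SM"
      using comb_line_mono[OF M] by simp
    define M0 where "M0 = line_point wM SM 0"
    have M0_words: "M0 \<in> words (Suc k) m"
      unfolding M0_def using line_point_in_words[OF M'] by simp
    have "\<forall>w\<in>words (Suc k) n. \<chi> (concat_word n w M0) < r"
      using bound concat_word_in_words[OF _ M0_words] by blast
    from IH[OF this] consider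
      (line) w S where "comb_line (Suc k) n w S" "monochromatic_line (\<lambda>v. \<chi> (concat_word n v M0)) (Suc k) w S"
    | (focused) f LW LS where "color_focused (\<lambda>v. \<chi> (concat_word n v M0)) k n s f LW LS"
      by blast
    then show "(\<exists>w S. comb_line (Suc k) (n + m) w S \<and> monochromatic_line \<chi> (Suc k) w S) \<or>
        (\<exists>f LW LS. color_focused \<chi> k (n + m) (Suc s) f LW LS)"
    proof cases
      case line
      then show ?thesis
        using monochromatic_line_concat_left[OF _ M0_words] by blast
    next
      case (focused f LW LS)
      show ?thesis
      proof (cases "\<exists>i<s. \<chi> (concat_word n f M0) = \<chi> (concat_word n (line_point (LW i) (LS i) 0) M0)")
        case True
        then show ?thesis
          using monochromatic_line_of_focus[OF focused] monochromatic_line_concat_left[OF _ M0_words]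
          by blast
      next
        case False
        then show ?thesis
          using color_focused_extend[OF focused M' M_mono M0_def] by blast
      qed
    qed
  qed
qed

lemma hales_jewett_Suc:
  assumes "hales_jewett k"
  shows "hales_jewett (Suc k)"
  unfolding hales_jewett_def
proof
  fix r :: nat
  obtain N where N: "\<And>\<chi>. \<forall>w\<in>words (Suc k) N. \<chi> w < r \<Longrightarrow>
     (\<exists>w S. comb_line (Suc k) N w S \<and> monochromatic_line \<chi> (Suc k) w S) \<or>
     (\<exists>f LW LS. color_focused \<chi> k N r f LW LS)"
    using hales_jewett_focusing[OF assms, of r r] by blast
  show "\<exists>N. \<forall>\<chi>. (\<forall>w\<in>words (Suc k) N. \<chi> w < r) \<longrightarrow>
      (\<exists>w S. comb_line (Suc k) N w S \<and> monochromatic_line \<chi> (Suc k) w S)"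
  proof (rule exI[of _ N], intro allI impI)
    fix \<chi> :: "(nat \<Rightarrow> nat) \<Rightarrow> nat"
    assume bound: "\<forall>w\<in>words (Suc k) N. \<chi> w < r"
    from N[OF this] show "\<exists>w S. comb_line (Suc k) N w S \<and> monochromatic_line \<chi> (Suc k) w S"
    proof (elim disjE exE)
      fix f LW LS
      assume foc: "color_focused \<chi> k N r f LW LS"
      then have L: "\<And>i. i < r \<Longrightarrow> comb_line (Suc k) N (LW i) (LS i)"
        and inj: "inj_on (\<lambda>i. \<chi> (line_point (LW i) (LS i) 0)) {..<r}"
        unfolding color_focused_def by blast+
      txt \<open>The \<open>r\<close> focused lines exhaust all \<open>r\<close> colors, so one of them has the color of \<open>f\<close>.\<close>
      have "(\<lambda>i. \<chi> (line_point (LW i) (LS i) 0)) ` {..<r} \<subseteq> {..<r}"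
        using bound line_point_in_words[OF L] by auto
      then have "(\<lambda>i. \<chi> (line_point (LW i) (LS i) 0)) ` {..<r} = {..<r}"
        using inj by (intro endo_inj_surj) auto
      moreover have "f \<in> words (Suc k) N"
        using foc unfolding color_focused_def by blast
      ultimately have "\<chi> f \<in> (\<lambda>i. \<chi> (line_point (LW i) (LS i) 0)) ` {..<r}"
        using bound by simp
      then obtain i where i: "i < r" "\<chi> f = \<chi> (line_point (LW i) (LS i) 0)"
        by auto
      then show ?thesis
        using monochromatic_line_of_focus[OF foc] by blast
    qed blast
  qed
qed

theorem hales_jewett_theorem: "0 < k \<Longrightarrow> hales_jewett k"
proof (induction k rule: nat_induct_non_zero)
  case 1
  show ?case
    unfolding hales_jewett_def comb_line_def monochromatic_line_def
    by (auto intro!: exI[of _ 1] exI[of _ "{0}"] exI[of _ "\<lambda>_. 0"] zero_in_words)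
next
  case (Suc k)
  then show ?case by (simp add: hales_jewett_Suc)
qed

section \<open>Products of lines and prefix-determined colorings\<close>

definition word_tuples :: "(nat \<Rightarrow> nat) \<Rightarrow> (nat \<Rightarrow> nat) \<Rightarrow> nat \<Rightarrow> (nat \<Rightarrow> nat \<Rightarrow> nat) set" where
  "word_tuples kf Nf D = {g. (\<forall>j<D. g j \<in> words (kf j) (Nf j)) \<and> (\<forall>j. D \<le> j \<longrightarrow> g j = (\<lambda>_. 0))}"

definition tuple_point ::
    "nat \<Rightarrow> (nat \<Rightarrow> nat \<Rightarrow> nat) \<Rightarrow> (nat \<Rightarrow> nat set) \<Rightarrow> (nat \<Rightarrow> nat) \<Rightarrow> nat \<Rightarrow> nat \<Rightarrow> nat" where
  "tuple_point D W SS t = (\<lambda>j. if j < D then line_point (W j) (SS j) (t j) else (\<lambda>_. 0))"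

definition prefix_determined :: "(nat \<Rightarrow> nat \<Rightarrow> (nat \<Rightarrow> nat \<Rightarrow> nat) \<Rightarrow> 'c) \<Rightarrow> bool" where
  "prefix_determined \<Phi> \<longleftrightarrow>
     (\<forall>x j g g'. (\<forall>y<x. g y = g' y) \<and> (\<forall>i<j. g x i = g' x i) \<longrightarrow> \<Phi> x j g = \<Phi> x j g')"

lemma finite_word_tuples: "finite (word_tuples kf Nf D)"
proof -
  let ?ext = "\<lambda>f j. if j < D then f j else (\<lambda>_. 0)"
  have "word_tuples kf Nf D \<subseteq> ?ext ` (PiE {..<D} (\<lambda>j. words (kf j) (Nf j)))"
  proof
    fix g assume g: "g \<in> word_tuples kf Nf D"
    then have "g = ?ext (restrict g {..<D})"
      by (auto simp: word_tuples_def)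
    moreover have "restrict g {..<D} \<in> PiE {..<D} (\<lambda>j. words (kf j) (Nf j))"
      using g by (auto simp: word_tuples_def)
    ultimately show "g \<in> ?ext ` (PiE {..<D} (\<lambda>j. words (kf j) (Nf j)))"
      by blast
  qed
  then show ?thesis
    by (rule finite_subset) (auto intro!: finite_PiE finite_words)
qed

lemma word_tuples_upd:
  "g \<in> word_tuples kf Nf D \<Longrightarrow> u \<in> words (kf D) N \<Longrightarrow> g(D := u) \<in> word_tuples kf (Nf(D := N)) (Suc D)"
  unfolding word_tuples_def by auto

lemma word_tuples_Suc:
  "0 < kf D \<Longrightarrow> g \<in> word_tuples kf Nf D \<Longrightarrow> g \<in> word_tuples kf (Nf(D := N)) (Suc D)"
  unfolding word_tuples_def using zero_in_words by (auto simp: less_Suc_eq)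

lemma letter_of_word_tuple:
  "g \<in> word_tuples kf Nf D \<Longrightarrow> j < D \<Longrightarrow> 0 < kf j \<Longrightarrow> g j i < kf j"
  unfolding word_tuples_def using letter_less_alphabet by blast

lemma tuple_point_in_word_tuples:
  "\<forall>j<D. comb_line (kf j) (Nf j) (W j) (SS j) \<Longrightarrow> \<forall>j<D. t j < kf j \<Longrightarrow>
     tuple_point D W SS t \<in> word_tuples kf Nf D"
  unfolding word_tuples_def tuple_point_def using line_point_in_words by auto

lemma tuple_point_Suc:
  "tuple_point (Suc D) (W(D := w)) (SS(D := S)) t = (tuple_point D W SS t)(D := line_point w S (t D))"
  unfolding tuple_point_def by (rule ext) auto

lemma prefix_determinedD:
  "prefix_determined \<Phi> \<Longrightarrow> (\<And>y. y < x \<Longrightarrow> g y = g' y) \<Longrightarrow> (\<And>i. i < j \<Longrightarrow> g x i = g' x i) \<Longrightarrow>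
     \<Phi> x j g = \<Phi> x j g'"
  unfolding prefix_determined_def by blast

lemma prefix_determined_upd_above:
  "prefix_determined \<Phi> \<Longrightarrow> x < D \<Longrightarrow> \<Phi> x j (g(D := u)) = \<Phi> x j g"
  by (erule prefix_determinedD) auto

lemma prefix_determined_line:
  assumes "prefix_determined \<Phi>" "finite S"
  shows "\<Phi> D (Min S) (g(D := line_point w S t)) = \<Phi> D (Min S) (g(D := w))"
proof -
  have "line_point w S t i = w i" if "i < Min S" for i
    using that assms(2) Min_le unfolding line_point_def by fastforce
  then show ?thesis
    by (intro prefix_determinedD[OF assms(1)]) auto
qed

lemma mixed_radix_code:
  fixes a c :: nat
  assumes "a < r" "c < b"
  shows "a + r * c < r * b" "(a + r * c) mod r = a" "(a + r * c) div r = c"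
proof -
  have "a + r * c < r * Suc c" using assms(1) by simp
  also have "\<dots> \<le> r * b" using assms(2) by (intro mult_le_mono2) simp
  finally show "a + r * c < r * b" .
  show "(a + r * c) mod r = a" "(a + r * c) div r = c"
    using assms(1) by simp_all
qed

definition constant_on_product ::
    "(nat \<Rightarrow> nat) \<Rightarrow> nat \<Rightarrow> (nat \<Rightarrow> nat \<Rightarrow> nat) \<Rightarrow> (nat \<Rightarrow> nat set) \<Rightarrow> ((nat \<Rightarrow> nat \<Rightarrow> nat) \<Rightarrow> 'c) \<Rightarrow> bool" where
  "constant_on_product kf D W SS F \<longleftrightarrow> (\<exists>col. \<forall>t. (\<forall>j<D. t j < kf j) \<longrightarrow> F (tuple_point D W SS t) = col)"

lemma constant_on_product_compose:
  assumes "constant_on_product kf D W SS F"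
    and "\<And>t. \<forall>j<D. t j < kf j \<Longrightarrow> G (tuple_point D W SS t) = h (F (tuple_point D W SS t))"
  shows "constant_on_product kf D W SS G"
proof -
  obtain col where "\<And>t. \<forall>j<D. t j < kf j \<Longrightarrow> F (tuple_point D W SS t) = col"
    using assms(1) unfolding constant_on_product_def by blast
  then show ?thesis
    unfolding constant_on_product_def using assms(2) by (intro exI[of _ "h col"]) simp
qed

lemma constant_on_product_upd:
  assumes "constant_on_product kf D W SS F" and "\<And>g u. F (g(D := u)) = F g"
  shows "constant_on_product kf (Suc D) (W(D := w)) (SS(D := S)) F"
  using assms unfolding constant_on_product_def tuple_point_Suc by auto

lemma constant_on_product_SucI:
  assumes L: "\<forall>j<D. comb_line (kf j) (Nf j) (W j) (SS j)"
    and const: "constant_on_product kf D W SS (\<lambda>g. F (g(D := line_point w S 0)))"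
    and line: "\<And>g t. g \<in> word_tuples kf Nf D \<Longrightarrow> t < kf D \<Longrightarrow>
                 F (g(D := line_point w S t)) = F (g(D := line_point w S 0))"
  shows "constant_on_product kf (Suc D) (W(D := w)) (SS(D := S)) F"
proof -
  obtain col where col: "\<And>t. \<forall>j<D. t j < kf j \<Longrightarrow> F ((tuple_point D W SS t)(D := line_point w S 0)) = col"
    using const unfolding constant_on_product_def by blast
  have "F ((tuple_point D W SS t)(D := line_point w S (t D))) = col" if "\<forall>j<Suc D. t j < kf j" for t
    using line[OF tuple_point_in_word_tuples[OF L]] col that by simp
  then show ?thesis
    unfolding constant_on_product_def tuple_point_Suc by blast
qed

lemma constant_on_product_extend:
  assumes L: "\<forall>j<D. comb_line (kf j) (Nf j) (W j) (SS j)"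
    and SM: "finite SM" and loc: "prefix_determined \<Phi>"
    and \<psi>_line: "\<And>g t. g \<in> word_tuples kf Nf D \<Longrightarrow> t < kf D \<Longrightarrow>
                    \<psi> (g(D := line_point wM SM t)) = \<psi> (g(D := line_point wM SM 0))"
    and C\<psi>: "constant_on_product kf D W SS (\<lambda>g. \<psi> (g(D := line_point wM SM 0)))"
    and C\<Phi>_D: "constant_on_product kf D W SS (\<lambda>g. \<Phi> D (Min SM) (g(D := line_point wM SM 0)))"
    and C\<Phi>: "\<forall>x<D. constant_on_product kf D W SS (\<Phi> x (Min (SS x)))"
  shows "constant_on_product kf (Suc D) (W(D := wM)) (SS(D := SM)) \<psi> \<and>
    (\<forall>x<Suc D. constant_on_product kf (Suc D) (W(D := wM)) (SS(D := SM)) (\<Phi> x (Min ((SS(D := SM)) x))))"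
proof -
  have "\<Phi> D (Min SM) (g(D := line_point wM SM t)) = \<Phi> D (Min SM) (g(D := line_point wM SM 0))" for g t
    unfolding prefix_determined_line[OF loc SM] ..
  then have "constant_on_product kf (Suc D) (W(D := wM)) (SS(D := SM)) (\<Phi> D (Min SM))"
    using constant_on_product_SucI[OF L C\<Phi>_D] by blast
  moreover have "constant_on_product kf (Suc D) (W(D := wM)) (SS(D := SM)) (\<Phi> x (Min (SS x)))"
    if "x < D" for x
    using constant_on_product_upd C\<Phi> prefix_determined_upd_above[OF loc that] that by blast
  ultimately show ?thesis
    using constant_on_product_SucI[OF L C\<psi> \<psi>_line] by (auto simp: less_Suc_eq)
qed

definition product_ramsey :: "(nat \<Rightarrow> nat) \<Rightarrow> nat \<Rightarrow> nat \<Rightarrow> nat \<Rightarrow> (nat \<Rightarrow> nat) \<Rightarrow> bool" where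
  "product_ramsey kf D r b Nf \<longleftrightarrow>
     (\<forall>\<psi> \<Phi>. (\<forall>g\<in>word_tuples kf Nf D. \<psi> g < r) \<longrightarrow>
       (\<forall>x j. \<forall>g\<in>word_tuples kf Nf D. \<Phi> x j g < b) \<longrightarrow> prefix_determined \<Phi> \<longrightarrow>
       (\<exists>W SS. (\<forall>j<D. comb_line (kf j) (Nf j) (W j) (SS j)) \<and> constant_on_product kf D W SS \<psi> \<and>
          (\<forall>x<D. constant_on_product kf D W SS (\<Phi> x (Min (SS x))))))"

lemma product_ramsey_Suc:
  assumes kD: "0 < kf D" and IH: "product_ramsey kf D (r * b) b Nf"
  shows "\<exists>N. product_ramsey kf (Suc D) r b (Nf(D := N))"
proof -
  from hales_jewett_family[OF hales_jewett_theorem[OF kD] finite_word_tuples[of kf Nf D], of r]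
  obtain N where HM: "\<forall>\<chi>. (\<forall>g\<in>word_tuples kf Nf D. \<forall>u\<in>words (kf D) N. \<chi> g u < r) \<longrightarrow>
      (\<exists>w S. comb_line (kf D) N w S \<and> (\<forall>g\<in>word_tuples kf Nf D. monochromatic_line (\<chi> g) (kf D) w S))"
    by (rule exE)
  let ?Nf = "Nf(D := N)"
  have "product_ramsey kf (Suc D) r b ?Nf"
    unfolding product_ramsey_def
  proof (intro allI impI)
    fix \<psi> :: "(nat \<Rightarrow> nat \<Rightarrow> nat) \<Rightarrow> nat" and \<Phi> :: "nat \<Rightarrow> nat \<Rightarrow> (nat \<Rightarrow> nat \<Rightarrow> nat) \<Rightarrow> nat"
    assume \<psi>_bound: "\<forall>g\<in>word_tuples kf ?Nf (Suc D). \<psi> g < r"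
      and \<Phi>_bound: "\<forall>x j. \<forall>g\<in>word_tuples kf ?Nf (Suc D). \<Phi> x j g < b"
      and loc: "prefix_determined \<Phi>"
    have upd: "g(D := u) \<in> word_tuples kf ?Nf (Suc D)" if "g \<in> word_tuples kf Nf D" "u \<in> words (kf D) N" for g u
      using word_tuples_upd that .
    then obtain wM SM where M: "comb_line (kf D) N wM SM"
      and M_mono: "\<forall>g\<in>word_tuples kf Nf D. monochromatic_line (\<lambda>u. \<psi> (g(D := u))) (kf D) wM SM"
      using HM[rule_format, of "\<lambda>g u. \<psi> (g(D := u))"] \<psi>_bound by blast
    define M0 where "M0 = line_point wM SM 0"
    have M0: "M0 \<in> words (kf D) N"
      unfolding M0_def using line_point_in_words[OF M kD] .
    txt \<open>In the new coordinate \<open>\<Phi>\<close> only sees the letters of \<open>wM\<close> below \<open>Min SM\<close>, hence its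
      color there can be handed down, together with that of \<open>\<psi>\<close>, to the remaining coordinates.\<close>
    define \<psi>' where "\<psi>' g = \<psi> (g(D := M0)) + r * \<Phi> D (Min SM) (g(D := M0))" for g
    have "\<forall>g\<in>word_tuples kf Nf D. \<psi>' g < r * b"
      unfolding \<psi>'_def using upd[OF _ M0] \<psi>_bound \<Phi>_bound mixed_radix_code(1) by blast
    moreover have "\<forall>x j. \<forall>g\<in>word_tuples kf Nf D. \<Phi> x j g < b"
      using \<Phi>_bound word_tuples_Suc[of kf D, OF kD] by blast
    ultimately obtain W SS where L: "\<forall>j<D. comb_line (kf j) (Nf j) (W j) (SS j)"
      and C\<psi>': "constant_on_product kf D W SS \<psi>'"
      and C\<Phi>: "\<forall>x<D. constant_on_product kf D W SS (\<Phi> x (Min (SS x)))"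
      using IH loc unfolding product_ramsey_def by blast
    have decode: "\<psi> (g(D := M0)) = \<psi>' g mod r" "\<Phi> D (Min SM) (g(D := M0)) = \<psi>' g div r"
      if "g \<in> word_tuples kf Nf D" for g
      using mixed_radix_code(2,3) \<psi>_bound \<Phi>_bound upd[OF that M0] unfolding \<psi>'_def by auto
    have "constant_on_product kf D W SS (\<lambda>g. \<psi> (g(D := M0)))"
      using decode(1)[OF tuple_point_in_word_tuples[OF L]]
      by (rule constant_on_product_compose[OF C\<psi>', of _ "\<lambda>c. c mod r"])
    moreover have "constant_on_product kf D W SS (\<lambda>g. \<Phi> D (Min SM) (g(D := M0)))"
      using decode(2)[OF tuple_point_in_word_tuples[OF L]]
      by (rule constant_on_product_compose[OF C\<psi>', of _ "\<lambda>c. c div r"])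
    moreover have "\<psi> (g(D := line_point wM SM t)) = \<psi> (g(D := M0))"
      if "g \<in> word_tuples kf Nf D" "t < kf D" for g t
      using bspec[OF M_mono that(1), unfolded monochromatic_line_def, rule_format, OF that(2)]
      unfolding M0_def .
    moreover have "finite SM"
      using M unfolding comb_line_def by (meson finite_lessThan finite_subset)
    ultimately have "constant_on_product kf (Suc D) (W(D := wM)) (SS(D := SM)) \<psi> \<and>
        (\<forall>x<Suc D. constant_on_product kf (Suc D) (W(D := wM)) (SS(D := SM)) (\<Phi> x (Min ((SS(D := SM)) x))))"
      using constant_on_product_extend[OF L _ loc _ _ _ C\<Phi>] unfolding M0_def by blast
    moreover have "\<forall>j<Suc D. comb_line (kf j) (?Nf j) ((W(D := wM)) j) ((SS(D := SM)) j)"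
      using L M by (simp add: less_Suc_eq)
    ultimately show "\<exists>W SS. (\<forall>j<Suc D. comb_line (kf j) (?Nf j) (W j) (SS j)) \<and>
        constant_on_product kf (Suc D) W SS \<psi> \<and>
        (\<forall>x<Suc D. constant_on_product kf (Suc D) W SS (\<Phi> x (Min (SS x))))"
      by blast
  qed
  then show ?thesis ..
qed

lemma hales_jewett_product:
  "\<forall>j<D. 0 < kf j \<Longrightarrow> \<exists>Nf. product_ramsey kf D r b Nf"
proof (induction D arbitrary: r)
  case 0
  show ?case
    unfolding product_ramsey_def constant_on_product_def tuple_point_def by auto
next
  case (Suc D)
  then obtain Nf where "product_ramsey kf D (r * b) b Nf"
    by (metis less_SucI)
  then show ?case
    using product_ramsey_Suc Suc.prems by blast
qed

section \<open>Surjections coded by words\<close>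

lemma rigid_surj_letter: "rigid_surj a l r \<Longrightarrow> x < l \<Longrightarrow> \<exists>w<a. r (a + x) = Some w"
  unfolding rigid_surj_def by simp

lemma sealed_rigid_surj_letter: "sealed_rigid_surj a y r \<Longrightarrow> x < y \<Longrightarrow> \<exists>w<a. r (a + x) = Some w"
  unfolding sealed_rigid_surj_def by simp

lemma Min_in_lessThan:
  assumes "S \<noteq> {}" "S \<subseteq> {..<m}"
  shows "finite S" "Min S \<in> S" "Min S < (m::nat)"
proof -
  show fin: "finite S"
    using assms(2) finite_subset by blast
  show "Min S \<in> S"
    using Min_in[OF fin assms(1)] .
  then show "Min S < m"
    using assms(2) by blast
qed

lemma block_index_less: "(a::nat) \<le> z \<Longrightarrow> z < a + l * m \<Longrightarrow> (z - a) div m < l"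
  using less_mult_imp_div_less[of "z - a" l m] by simp

lemma block_position_less: "x < l \<Longrightarrow> i < m \<Longrightarrow> (a::nat) + x * m + i < a + l * m"
proof -
  assume "x < l" "i < m"
  then have "x * m + i < Suc x * m" by simp
  also have "\<dots> \<le> l * m" using \<open>x < l\<close> by (intro mult_le_mono1) simp
  finally show ?thesis by simp
qed

lemma lex_position_less:
  fixes a z x jj m :: nat
  assumes "a \<le> z" "z < a + x * m + jj" "jj \<le> m"
  shows "(z - a) div m < x \<or> ((z - a) div m = x \<and> (z - a) mod m < jj)"
proof -
  define q where "q = (z - a) div m"
  define r where "r = (z - a) mod m"
  have lt: "q * m + r < x * m + jj"
    using assms(1,2) unfolding q_def r_def by simp
  show ?thesis
  proof (cases "x < q")
    case True
    then have "Suc x * m \<le> q * m" by (intro mult_le_mono1) simp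
    then show ?thesis using lt assms(3) by simp
  next
    case False
    then show ?thesis using lt unfolding q_def[symmetric] r_def[symmetric] by auto
  qed
qed

definition block_map :: "nat \<Rightarrow> nat \<Rightarrow> nat \<Rightarrow> (nat \<Rightarrow> nat \<Rightarrow> nat) \<Rightarrow> nat \<rightharpoonup> nat" where
  "block_map a l m G z =
     (if z < a then Some z
      else if z < a + l * m then Some (G ((z - a) div m) ((z - a) mod m))
      else None)"

definition sealed_block_map :: "nat \<Rightarrow> nat \<Rightarrow> (nat \<Rightarrow> nat \<Rightarrow> nat) \<Rightarrow> nat \<Rightarrow> nat \<Rightarrow> nat \<rightharpoonup> nat" where
  "sealed_block_map a m G x jj z =
     (if z < a then Some z
      else if z < a + x * m + jj then Some (G ((z - a) div m) ((z - a) mod m))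
      else if z = a + x * m + jj then Some a
      else None)"

text \<open>The map with property (P) given by one combinatorial line \<open>(WG x, SG x)\<close> over the alphabet
  \<open>A\<close> for each \<open>x \<in> L\<close>: \<open>(x, i)\<close> goes to \<open>x\<close> if \<open>i\<close> is a variable position of that line, and to
  its letter \<open>WG x i\<close> otherwise.\<close>
definition line_map ::
    "nat \<Rightarrow> nat \<Rightarrow> nat \<Rightarrow> (nat \<Rightarrow> nat \<Rightarrow> nat) \<Rightarrow> (nat \<Rightarrow> nat set) \<Rightarrow> nat \<rightharpoonup> nat" where
  "line_map a l m WG SG z =
     (if z < a then Some z
      else if z < a + l * m then
        (if (z - a) mod m \<in> SG ((z - a) div m) then Some (a + (z - a) div m)
         else Some (WG ((z - a) div m) ((z - a) mod m)))
      else None)"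

lemma block_map_rigid_surj:
  assumes "\<forall>x<l. \<forall>i. G x i < a"
  shows "rigid_surj a (l * m) (block_map a l m G)"
proof -
  have "(z - a) div m < l" if "a \<le> z" "z < a + l * m" for z
    using block_index_less that .
  then show ?thesis
    using assms unfolding rigid_surj_def block_map_def dom_def by auto
qed

lemma sealed_block_map_sealed:
  assumes "jj < m" "\<forall>y\<le>x. \<forall>i. G y i < a"
  shows "sealed_rigid_surj a (x * m + jj) (sealed_block_map a m G x jj)"
proof -
  have "(z - a) div m \<le> x" if "a \<le> z" "z < a + (x * m + jj)" for z
    using lex_position_less[of a z x m jj] that assms(1) by auto
  then show ?thesis
    using assms unfolding sealed_rigid_surj_def sealed_block_map_def dom_def by auto
qed

lemma line_map_propP:
  assumes "0 < m" and S: "\<forall>x<l. SG x \<noteq> {} \<and> SG x \<subseteq> {..<m}" and WG: "\<forall>x<l. \<forall>i. WG x i < a"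
  shows "propP a l m (line_map a l m WG SG)"
  unfolding propP_def
proof (intro conjI allI impI)
  show "dom (line_map a l m WG SG) = {..<a + l * m}" "\<And>z. z < a \<Longrightarrow> line_map a l m WG SG z = Some z"
    unfolding line_map_def dom_def by auto
  fix x assume x: "x < l"
  then have "SG x \<noteq> {}" "SG x \<subseteq> {..<m}"
    using S by auto
  then have "Min (SG x) \<in> SG x" "Min (SG x) < m"
    using Min_in_lessThan by blast+
  then show "\<exists>i<m. line_map a l m WG SG (a + x * m + i) = Some (a + x)"
    using block_position_less[OF x] unfolding line_map_def by (intro exI[of _ "Min (SG x)"]) simp
  show "\<exists>w. line_map a l m WG SG (a + x * m + i) = Some w \<and> (w < a \<or> w = a + x)" if "i < m" for i
    using block_position_less[OF x that] that WG x unfolding line_map_def by auto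
qed

lemma line_map_comp_at:
  assumes "a \<le> z" "z < a + l * m" "\<forall>y<a. r y = Some y"
    and "r (a + (z - a) div m) = Some w" "\<forall>i. WG ((z - a) div m) i < a"
  shows "(r \<circ>\<^sub>m line_map a l m WG SG) z
    = Some (line_point (WG ((z - a) div m)) (SG ((z - a) div m)) w ((z - a) mod m))"
  using assms unfolding line_map_def map_comp_def line_point_def by auto

lemma block_map_eq_comp_line_map:
  assumes r: "rigid_surj a l r" and WG: "\<forall>x<l. \<forall>i. WG x i < a"
    and G: "\<forall>x<l. G x = line_point (WG x) (SG x) (the (r (a + x)))"
  shows "block_map a l m G = r \<circ>\<^sub>m line_map a l m WG SG"
proof
  fix z
  have r_id: "\<forall>y<a. r y = Some y"
    using r unfolding rigid_surj_def by blast
  show "block_map a l m G z = (r \<circ>\<^sub>m line_map a l m WG SG) z"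
  proof (cases "a \<le> z \<and> z < a + l * m")
    case True
    then have x: "(z - a) div m < l"
      using block_index_less by blast
    then obtain w where "r (a + (z - a) div m) = Some w"
      using rigid_surj_letter[OF r] by blast
    then show ?thesis
      using line_map_comp_at[OF _ _ r_id] True x G WG unfolding block_map_def by simp
  next
    case False
    then show ?thesis
      using r_id unfolding block_map_def line_map_def map_comp_def by auto
  qed
qed

lemma p_up_line_map:
  assumes x: "x < l" and S: "SG x \<noteq> {}" "SG x \<subseteq> {..<m}" and WG: "\<forall>x<l. \<forall>i. WG x i < a"
  shows "p_up a (line_map a l m WG SG) x = line_map a l m WG SG |` {..a + x * m + Min (SG x)}"
proof -
  note fin = Min_in_lessThan(1)[OF S] and Min = Min_in_lessThan(2,3)[OF S]
  have "(LEAST z. line_map a l m WG SG z = Some (a + x)) = a + x * m + Min (SG x)"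
  proof (rule Least_equality)
    show "line_map a l m WG SG (a + x * m + Min (SG x)) = Some (a + x)"
      using Min block_position_less[OF x Min(2)] unfolding line_map_def by simp
    fix z assume z: "line_map a l m WG SG z = Some (a + x)"
    then have "a \<le> z" "z < a + l * m"
      unfolding line_map_def by (auto split: if_splits)
    moreover have "WG ((z - a) div m) ((z - a) mod m) < a"
      using WG block_index_less calculation by blast
    ultimately have "(z - a) mod m \<in> SG ((z - a) div m)" "(z - a) div m = x"
      using z unfolding line_map_def by (auto split: if_splits)
    then have "Min (SG x) \<le> (z - a) mod m"
      using Min_le[OF fin] by blast
    moreover have "z - a = x * m + (z - a) mod m"
      using div_mult_mod_eq[of "z - a" m] \<open>(z - a) div m = x\<close> by simp
    ultimately show "a + x * m + Min (SG x) \<le> z"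
      using \<open>a \<le> z\<close> by linarith
  qed
  then show ?thesis
    unfolding p_up_def by simp
qed

lemma sealed_block_map_eq_comp_p_up:
  assumes x: "x < l" and r: "sealed_rigid_surj a x r"
    and S: "\<forall>x<l. SG x \<noteq> {} \<and> SG x \<subseteq> {..<m}" and WG: "\<forall>x<l. \<forall>i. WG x i < a"
    and G_below: "\<forall>y<x. G y = line_point (WG y) (SG y) (the (r (a + y)))"
    and G_x: "G x = line_point (WG x) (SG x) t"
  shows "sealed_block_map a m G x (Min (SG x)) = r \<circ>\<^sub>m p_up a (line_map a l m WG SG) x"
proof
  fix z
  define Z where "Z = a + x * m + Min (SG x)"
  have Sx: "SG x \<noteq> {}" "SG x \<subseteq> {..<m}"
    using S x by auto
  note fin = Min_in_lessThan(1)[OF Sx] and Min = Min_in_lessThan(2,3)[OF Sx]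
  have r_id: "\<forall>y<a. r y = Some y"
    using r unfolding sealed_rigid_surj_def by blast
  have p_up: "p_up a (line_map a l m WG SG) x = line_map a l m WG SG |` {..Z}"
    unfolding Z_def using p_up_line_map[of x l SG m WG a, OF x Sx WG] .
  have Z: "Z < a + l * m"
    unfolding Z_def using block_position_less[OF x Min(2)] .
  consider "z < a" | "a \<le> z" "z < Z" | "z = Z" | "Z < z" by linarith
  then show "sealed_block_map a m G x (Min (SG x)) z = (r \<circ>\<^sub>m p_up a (line_map a l m WG SG) x) z"
  proof cases
    case 1
    then show ?thesis
      using r_id Z unfolding p_up sealed_block_map_def line_map_def map_comp_def Z_def by simp
  next
    case 2
    define y where "y = (z - a) div m"
    define i where "i = (z - a) mod m"
    have lex: "y < x \<or> (y = x \<and> i < Min (SG x))"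
      using lex_position_less[OF 2(1) 2(2)[unfolded Z_def]] Min unfolding y_def i_def by simp
    then have "y < l" "z < a + l * m"
      using x 2 Z by auto
    obtain w where w: "r (a + y) = Some w" and G_y: "G y i = line_point (WG y) (SG y) w i"
    proof (cases "y < x")
      case True
      then obtain w where "r (a + y) = Some w"
        using sealed_rigid_surj_letter[OF r] by blast
      with True show thesis
        using that G_below by simp
    next
      case False
      then have "i \<notin> SG x" "y = x"
        using lex Min_le[OF fin] by fastforce+
      moreover have "r (a + x) = Some a"
        using r unfolding sealed_rigid_surj_def by blast
      ultimately show thesis
        using that[of a] G_x unfolding line_point_def by simp
    qed
    have "(r \<circ>\<^sub>m line_map a l m WG SG) z = Some (G y i)"
      using line_map_comp_at[OF 2(1) \<open>z < a + l * m\<close> r_id] w WG \<open>y < l\<close> G_y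
      unfolding y_def i_def by simp
    then show ?thesis
      using 2 unfolding p_up sealed_block_map_def map_comp_def Z_def y_def i_def by simp
  next
    case 3
    have "line_map a l m WG SG Z = Some (a + x)"
      using Min Z unfolding line_map_def Z_def by simp
    moreover have "r (a + x) = Some a"
      using r unfolding sealed_rigid_surj_def by blast
    ultimately show ?thesis
      using 3 unfolding p_up sealed_block_map_def map_comp_def Z_def by simp
  next
    case 4
    then show ?thesis
      unfolding p_up sealed_block_map_def map_comp_def Z_def by simp
  qed
qed

lemma sealed_block_map_cong:
  assumes "\<forall>y<x. G y = G' y" "\<forall>i<jj. G x i = G' x i" "jj \<le> m"
  shows "sealed_block_map a m G x jj = sealed_block_map a m G' x jj"
proof
  fix z
  have "G ((z - a) div m) ((z - a) mod m) = G' ((z - a) div m) ((z - a) mod m)"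
    if "a \<le> z" "z < a + x * m + jj"
    using lex_position_less[OF that assms(3)] assms(1,2) by auto
  then show "sealed_block_map a m G x jj z = sealed_block_map a m G' x jj z"
    unfolding sealed_block_map_def by simp
qed

lemma block_map_cong:
  assumes "\<forall>x<l. G x = G' x"
  shows "block_map a l m G = block_map a l m G'"
proof
  fix z
  have "G ((z - a) div m) = G' ((z - a) div m)" if "a \<le> z" "z < a + l * m"
    using block_index_less[OF that] assms by simp
  then show "block_map a l m G z = block_map a l m G' z"
    unfolding block_map_def by simp
qed

section \<open>Coding tuples of surjections by points of a product\<close>

locale tuple_layout =
  fixes as ls :: "nat list"
  assumes length_ls: "length ls = length as"
    and as_nonempty: "as \<noteq> []"
    and as_pos: "\<forall>a\<in>set as. 0 < a"
begin

abbreviation n :: nat where "n \<equiv> length as"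

text \<open>The coordinates of the product are grouped into \<open>n\<close> blocks of length \<open>block_len\<close>; coordinate
  \<open>coord i x\<close> carries the element \<open>x\<close> of \<open>L\<^sub>i\<close>. The blocks are ordered \<open>L\<^sub>2, \<dots>, L\<^sub>n, L\<^sub>1\<close>, so
  that the component of the sealed surjection comes last.\<close>
definition block_len :: nat where
  "block_len = Suc (sum_list ls)"

definition coord :: "nat \<Rightarrow> nat \<Rightarrow> nat" where
  "coord i x = ((i + n - 1) mod n) * block_len + x"

definition component :: "nat \<Rightarrow> nat" where
  "component j = (j div block_len + 1) mod n"

definition alphabet :: "nat \<Rightarrow> nat" where
  "alphabet j = as ! component j"

lemma n_pos: "0 < n"
  using as_nonempty by simp

lemma ls_less_block_len: "i < n \<Longrightarrow> ls ! i < block_len"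
  using elem_le_sum_list[of i ls] length_ls unfolding block_len_def by simp

lemma coord_less: "x < block_len \<Longrightarrow> coord i x < n * block_len"
proof -
  assume x: "x < block_len"
  have "coord i x < Suc ((i + n - 1) mod n) * block_len"
    unfolding coord_def using x by simp
  also have "\<dots> \<le> n * block_len"
    using n_pos by (intro mult_le_mono1) (simp add: Suc_leI)
  finally show ?thesis .
qed

lemma coord_div: "x < block_len \<Longrightarrow> coord i x div block_len = (i + n - 1) mod n"
  and coord_mod: "x < block_len \<Longrightarrow> coord i x mod block_len = x"
  unfolding coord_def by simp_all

lemma component_coord: "i < n \<Longrightarrow> x < block_len \<Longrightarrow> component (coord i x) = i"
proof -
  assume "i < n" "x < block_len"
  then have "component (coord i x) = ((i + n - 1) mod n + 1) mod n"
    unfolding component_def coord_div[OF \<open>x < block_len\<close>] by simp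
  also have "\<dots> = (i + n - 1 + 1) mod n"
    by (rule mod_add_left_eq)
  also have "\<dots> = i"
    using n_pos \<open>i < n\<close> by simp
  finally show ?thesis .
qed

lemma alphabet_coord: "i < n \<Longrightarrow> x < block_len \<Longrightarrow> alphabet (coord i x) = as ! i"
  unfolding alphabet_def by (simp add: component_coord)

lemma alphabet_pos: "0 < alphabet j"
proof -
  have "component j < n" unfolding component_def using n_pos by simp
  then show ?thesis unfolding alphabet_def using as_pos by simp
qed

lemma coord_0: "coord 0 x = (n - 1) * block_len + x"
proof -
  have "(n - 1) mod n = n - 1"
    using n_pos by simp
  then show ?thesis
    unfolding coord_def by simp
qed

lemma coord_less_coord_0: "1 \<le> i \<Longrightarrow> i < n \<Longrightarrow> x' < block_len \<Longrightarrow> coord i x' < coord 0 x"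
proof -
  assume i: "1 \<le> i" "i < n" and x': "x' < block_len"
  obtain k where k: "i = Suc k"
    using i(1) by (cases i) auto
  then have "coord i x' = k * block_len + x'"
    unfolding coord_def using i(2) by simp
  also have "\<dots> < Suc k * block_len"
    using x' by simp
  also have "\<dots> \<le> (n - 1) * block_len"
    using i(2) k by (intro mult_le_mono1) simp
  finally show ?thesis
    unfolding coord_0 by simp
qed

definition blocks :: "(nat \<Rightarrow> 'a) \<Rightarrow> nat \<Rightarrow> nat \<Rightarrow> 'a" where
  "blocks g i x = g (coord i x)"

definition sealed_tuple :: "nat \<Rightarrow> (nat \<Rightarrow> nat \<Rightarrow> nat) \<Rightarrow> nat \<Rightarrow> nat \<Rightarrow> (nat \<rightharpoonup> nat) list" where
  "sealed_tuple m g x jj = map (\<lambda>i. if i = 0 then sealed_block_map (as ! 0) m (blocks g 0) x jj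
      else block_map (as ! i) (ls ! i) m (blocks g i)) [0..<n]"

lemma sealed_tuple_admissible:
  assumes g: "g \<in> word_tuples alphabet Nf (n * block_len)" and x: "x < ls ! 0" and jj: "jj < m"
  shows "admissible as ls m (sealed_tuple m g x jj)"
proof -
  have letters: "blocks g i x' r < as ! i" if "i < n" "x' < ls ! i" for i x' r
    using letter_of_word_tuple[OF g coord_less alphabet_pos] alphabet_coord ls_less_block_len that
    unfolding blocks_def by (metis order.strict_trans)
  have "x * m + jj < ls ! 0 * m"
    using block_position_less[OF x jj, of 0] by simp
  moreover have "sealed_rigid_surj (as ! 0) (x * m + jj) (sealed_tuple m g x jj ! 0)"
    unfolding sealed_tuple_def using n_pos x letters[OF n_pos]
    by (simp add: sealed_block_map_sealed[OF jj] le_less_trans)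
  moreover have "rigid_surj (as ! i) (ls ! i * m) (sealed_tuple m g x jj ! i)" if "1 \<le> i" "i < n" for i
    unfolding sealed_tuple_def using that letters by (simp add: block_map_rigid_surj)
  ultimately show ?thesis
    unfolding admissible_def sealed_tuple_def by auto
qed

lemma sealed_tuple_cong:
  assumes "\<forall>y<coord 0 x. g y = g' y" "\<forall>r<jj. g (coord 0 x) r = g' (coord 0 x) r" "jj \<le> m"
  shows "sealed_tuple m g x jj = sealed_tuple m g' x jj"
  unfolding sealed_tuple_def
proof (rule map_cong[OF refl])
  fix i assume "i \<in> set [0..<n]"
  then have i: "i < n" by simp
  have "blocks g 0 x' = blocks g' 0 x'" if "x' < x" for x'
    using assms(1) that unfolding blocks_def coord_0 by simp
  moreover have "blocks g i x' = blocks g' i x'" if "1 \<le> i" "x' < ls ! i" for x'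
    using assms(1) coord_less_coord_0[OF that(1) i] ls_less_block_len[OF i] that(2)
    unfolding blocks_def by simp
  ultimately show "(if i = 0 then sealed_block_map (as ! 0) m (blocks g 0) x jj
      else block_map (as ! i) (ls ! i) m (blocks g i)) =
    (if i = 0 then sealed_block_map (as ! 0) m (blocks g' 0) x jj
      else block_map (as ! i) (ls ! i) m (blocks g' i))"
    using assms(2,3) sealed_block_map_cong block_map_cong unfolding blocks_def
    by (simp add: Suc_le_eq)
qed

definition induced_coloring ::
    "nat \<Rightarrow> ((nat \<rightharpoonup> nat) list \<Rightarrow> nat) \<Rightarrow> nat \<Rightarrow> nat \<Rightarrow> (nat \<Rightarrow> nat \<Rightarrow> nat) \<Rightarrow> nat" where
  "induced_coloring m c j jj g =
     (if j div block_len = n - 1 \<and> j mod block_len < ls ! 0 \<and> jj < m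
      then c (sealed_tuple m g (j mod block_len) jj) else 0)"

lemma induced_coloring_coord_0:
  "x < ls ! 0 \<Longrightarrow> jj < m \<Longrightarrow> induced_coloring m c (coord 0 x) jj g = c (sealed_tuple m g x jj)"
  unfolding induced_coloring_def coord_0 using ls_less_block_len[OF n_pos] by simp

lemma induced_coloring_less:
  assumes "0 < b" "\<forall>s. admissible as ls m s \<longrightarrow> c s < b" "g \<in> word_tuples alphabet Nf (n * block_len)"
  shows "induced_coloring m c j jj g < b"
  using assms sealed_tuple_admissible unfolding induced_coloring_def by simp

lemma induced_coloring_prefix_determined: "prefix_determined (induced_coloring m c)"
  unfolding prefix_determined_def
proof (intro allI impI)
  fix j jj and g g' :: "nat \<Rightarrow> nat \<Rightarrow> nat"
  assume agree: "(\<forall>y<j. g y = g' y) \<and> (\<forall>i<jj. g j i = g' j i)"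
  show "induced_coloring m c j jj g = induced_coloring m c j jj g'"
  proof (cases "j div block_len = n - 1 \<and> j mod block_len < ls ! 0 \<and> jj < m")
    case True
    then have "j = coord 0 (j mod block_len)"
      unfolding coord_0 by (metis div_mult_mod_eq)
    then have "sealed_tuple m g (j mod block_len) jj = sealed_tuple m g' (j mod block_len) jj"
      using agree True by (intro sealed_tuple_cong) auto
    then show ?thesis
      unfolding induced_coloring_def by simp
  next
    case False
    then show ?thesis
      unfolding induced_coloring_def by auto
  qed
qed

text \<open>The point of the product determined by \<open>r\<^sub>1, \<dots>, r\<^sub>n\<close>: coordinate \<open>coord i y\<close> gets the
  letter \<open>r\<^sub>i (a\<^sub>i + y)\<close>, where only \<open>y < x\<close> is used in the sealed block; unused coordinates get 0.\<close>
definition letters :: "nat \<Rightarrow> (nat \<rightharpoonup> nat) list \<Rightarrow> nat \<Rightarrow> nat" where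
  "letters x rs j = (let i = component j; y = j mod block_len in
     if y < (if i = 0 then x else ls ! i) then the ((rs ! i) (as ! i + y)) else 0)"

lemma letters_coord:
  "i < n \<Longrightarrow> y < block_len \<Longrightarrow>
     letters x rs (coord i y) = (if y < (if i = 0 then x else ls ! i) then the ((rs ! i) (as ! i + y)) else 0)"
  unfolding letters_def Let_def by (simp add: component_coord coord_mod)

lemma letters_less:
  assumes "sealed_rigid_surj (as ! 0) x (rs ! 0)" "\<forall>i. 1 \<le> i \<and> i < n \<longrightarrow> rigid_surj (as ! i) (ls ! i) (rs ! i)"
  shows "letters x rs j < alphabet j"
proof -
  define i where "i = component j"
  define y where "y = j mod block_len"
  have "i < n"
    unfolding i_def component_def using n_pos by simp
  have "\<exists>w<as ! i. (rs ! i) (as ! i + y) = Some w" if y: "y < (if i = 0 then x else ls ! i)"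
  proof (cases "i = 0")
    case True
    then show ?thesis
      using sealed_rigid_surj_letter[OF assms(1)] y by simp
  next
    case False
    then have "rigid_surj (as ! i) (ls ! i) (rs ! i)"
      using assms(2) \<open>i < n\<close> by simp
    then show ?thesis
      using rigid_surj_letter False y by simp
  qed
  moreover have "0 < as ! i"
    using as_pos \<open>i < n\<close> by simp
  ultimately show ?thesis
    unfolding letters_def Let_def alphabet_def i_def[symmetric] y_def[symmetric] by auto
qed

definition line_maps :: "nat \<Rightarrow> (nat \<Rightarrow> nat \<Rightarrow> nat) \<Rightarrow> (nat \<Rightarrow> nat set) \<Rightarrow> (nat \<rightharpoonup> nat) list" where
  "line_maps m W SS = map (\<lambda>i. line_map (as ! i) (ls ! i) m (blocks W i) (blocks SS i)) [0..<n]"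

context
  fixes m Nf W SS
  assumes lines: "\<forall>j<n * block_len. comb_line (alphabet j) (Nf j) (W j) (SS j)"
    and lengths: "\<forall>j<n * block_len. Nf j < m"
begin

lemma block_lines:
  assumes i: "i < n" and x: "x < block_len"
  shows "blocks SS i x \<noteq> {}" "blocks SS i x \<subseteq> {..<m}" "blocks W i x r < as ! i"
proof -
  have j: "coord i x < n * block_len"
    using coord_less[OF x] .
  have line: "comb_line (as ! i) (Nf (coord i x)) (W (coord i x)) (SS (coord i x))"
    using lines[rule_format, OF j] unfolding alphabet_coord[OF i x] .
  then show "blocks SS i x \<noteq> {}" "blocks SS i x \<subseteq> {..<m}"
    using lengths[rule_format, OF j] unfolding blocks_def comb_line_def by auto
  have "0 < as ! i"
    using as_pos i by simp
  then show "blocks W i x r < as ! i"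
    using line letter_less_alphabet unfolding blocks_def comb_line_def by blast
qed

lemma line_blocks:
  assumes "i < n"
  shows "\<forall>x<ls ! i. blocks SS i x \<noteq> {} \<and> blocks SS i x \<subseteq> {..<m}"
    and "\<forall>x<ls ! i. \<forall>r. blocks W i x r < as ! i"
proof -
  have x: "x < block_len" if "x < ls ! i" for x
    using ls_less_block_len[OF assms] that by simp
  show "\<forall>x<ls ! i. blocks SS i x \<noteq> {} \<and> blocks SS i x \<subseteq> {..<m}"
    using block_lines(1,2)[OF assms x] by simp
  show "\<forall>x<ls ! i. \<forall>r. blocks W i x r < as ! i"
    using block_lines(3)[OF assms x] by simp
qed

lemma line_maps_propP: "i < n \<Longrightarrow> propP (as ! i) (ls ! i) m (line_maps m W SS ! i)"
proof -
  assume i: "i < n"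
  have "0 < n * block_len"
    using n_pos unfolding block_len_def by simp
  then have "0 < m"
    using lengths by (metis gr_zeroI less_nat_zero_code)
  then show ?thesis
    unfolding line_maps_def using line_map_propP[OF _ line_blocks[OF i]] i by simp
qed

lemma sealed_tuple_letters:
  assumes x: "x < ls ! 0"
    and r0: "sealed_rigid_surj (as ! 0) x (rs ! 0)"
    and r: "\<forall>i. 1 \<le> i \<and> i < n \<longrightarrow> rigid_surj (as ! i) (ls ! i) (rs ! i)"
  shows "sealed_tuple m (tuple_point (n * block_len) W SS (letters x rs)) x (Min (SS (coord 0 x))) =
    map (\<lambda>i. if i = 0 then rs ! 0 \<circ>\<^sub>m p_up (as ! 0) (line_maps m W SS ! 0) x
      else rs ! i \<circ>\<^sub>m line_maps m W SS ! i) [0..<n]"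
  unfolding sealed_tuple_def
proof (rule map_cong[OF refl])
  fix i assume "i \<in> set [0..<n]"
  then have i: "i < n" by simp
  let ?g = "tuple_point (n * block_len) W SS (letters x rs)"
  have G: "blocks ?g i y = line_point (blocks W i y) (blocks SS i y)
      (if y < (if i = 0 then x else ls ! i) then the ((rs ! i) (as ! i + y)) else 0)"
    if "i < n" "y < block_len" for i y
    using coord_less[OF that(2)] letters_coord[OF that]
    unfolding blocks_def tuple_point_def by simp
  show "(if i = 0 then sealed_block_map (as ! 0) m (blocks ?g 0) x (Min (SS (coord 0 x)))
      else block_map (as ! i) (ls ! i) m (blocks ?g i)) =
    (if i = 0 then rs ! 0 \<circ>\<^sub>m p_up (as ! 0) (line_maps m W SS ! 0) x else rs ! i \<circ>\<^sub>m line_maps m W SS ! i)"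
  proof (cases "i = 0")
    case True
    have "x < block_len"
      using x ls_less_block_len[OF n_pos] by simp
    then have "\<forall>y<x. blocks ?g 0 y = line_point (blocks W 0 y) (blocks SS 0 y) (the ((rs ! 0) (as ! 0 + y)))"
      and "blocks ?g 0 x = line_point (blocks W 0 x) (blocks SS 0 x) 0"
      using G[OF n_pos] by simp_all
    from sealed_block_map_eq_comp_p_up[OF x r0 line_blocks[OF n_pos] this]
    show ?thesis
      using True n_pos unfolding line_maps_def blocks_def[of SS] by simp
  next
    case False
    then have G_i: "\<forall>y<ls ! i. blocks ?g i y = line_point (blocks W i y) (blocks SS i y) (the ((rs ! i) (as ! i + y)))"
      using G[OF i] ls_less_block_len[OF i] by simp
    have "rigid_surj (as ! i) (ls ! i) (rs ! i)"
      using r i False by simp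
    from block_map_eq_comp_line_map[OF this line_blocks(2)[OF i] G_i]
    show ?thesis
      using False i unfolding line_maps_def by simp
  qed
qed

lemma color_of_composition_constant:
  assumes x: "x < ls ! 0"
    and const: "constant_on_product alphabet (n * block_len) W SS
                  (induced_coloring m c (coord 0 x) (Min (SS (coord 0 x))))"
  shows "\<exists>col. \<forall>rs. sealed_rigid_surj (as ! 0) x (rs ! 0) \<and>
      (\<forall>i. 1 \<le> i \<and> i < n \<longrightarrow> rigid_surj (as ! i) (ls ! i) (rs ! i)) \<longrightarrow>
      c (map (\<lambda>i. if i = 0 then rs ! 0 \<circ>\<^sub>m p_up (as ! 0) (line_maps m W SS ! 0) x
        else rs ! i \<circ>\<^sub>m line_maps m W SS ! i) [0..<n]) = col"
proof -
  obtain col where col: "\<And>t. \<forall>j<n * block_len. t j < alphabet j \<Longrightarrow>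
      induced_coloring m c (coord 0 x) (Min (SS (coord 0 x))) (tuple_point (n * block_len) W SS t) = col"
    using const unfolding constant_on_product_def by blast
  have "x < block_len"
    using x ls_less_block_len[OF n_pos] by simp
  then have "Min (SS (coord 0 x)) < m"
    using Min_in_lessThan(3)[OF block_lines(1,2)[OF n_pos]] unfolding blocks_def by blast
  have "c (map (\<lambda>i. if i = 0 then rs ! 0 \<circ>\<^sub>m p_up (as ! 0) (line_maps m W SS ! 0) x
        else rs ! i \<circ>\<^sub>m line_maps m W SS ! i) [0..<n]) = col"
    if r0: "sealed_rigid_surj (as ! 0) x (rs ! 0)"
      and r: "\<forall>i. 1 \<le> i \<and> i < n \<longrightarrow> rigid_surj (as ! i) (ls ! i) (rs ! i)" for rs
  proof -
    have "induced_coloring m c (coord 0 x) (Min (SS (coord 0 x)))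
        (tuple_point (n * block_len) W SS (letters x rs)) = col"
      using col letters_less[OF r0 r] by blast
    with \<open>Min (SS (coord 0 x)) < m\<close> show ?thesis
      using induced_coloring_coord_0[OF x] sealed_tuple_letters[OF x r0 r] by simp
  qed
  then show ?thesis
    by blast
qed

lemma line_maps_solution:
  assumes "\<forall>x<n * block_len.
    constant_on_product alphabet (n * block_len) W SS (induced_coloring m c x (Min (SS x)))"
  shows "length (line_maps m W SS) = n \<and> (\<forall>i<n. propP (as ! i) (ls ! i) m (line_maps m W SS ! i)) \<and>
    (\<forall>x<ls ! 0. \<exists>col. \<forall>rs. length rs = n \<and> sealed_rigid_surj (as ! 0) x (rs ! 0) \<and>
       (\<forall>i. 1 \<le> i \<and> i < n \<longrightarrow> rigid_surj (as ! i) (ls ! i) (rs ! i)) \<longrightarrow>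
       c (map (\<lambda>i. if i = 0 then rs ! 0 \<circ>\<^sub>m p_up (as ! 0) (line_maps m W SS ! 0) x
         else rs ! i \<circ>\<^sub>m line_maps m W SS ! i) [0..<n]) = col)"
proof -
  have "coord 0 x < n * block_len" if "x < ls ! 0" for x
    using coord_less ls_less_block_len[OF n_pos] that by simp
  then have "\<exists>col. \<forall>rs. sealed_rigid_surj (as ! 0) x (rs ! 0) \<and>
       (\<forall>i. 1 \<le> i \<and> i < n \<longrightarrow> rigid_surj (as ! i) (ls ! i) (rs ! i)) \<longrightarrow>
       c (map (\<lambda>i. if i = 0 then rs ! 0 \<circ>\<^sub>m p_up (as ! 0) (line_maps m W SS ! 0) x
         else rs ! i \<circ>\<^sub>m line_maps m W SS ! i) [0..<n]) = col" if "x < ls ! 0" for x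
    using color_of_composition_constant[OF that] assms that by blast
  moreover have "length (line_maps m W SS) = n"
    unfolding line_maps_def by simp
  ultimately show ?thesis
    using line_maps_propP by blast
qed

end

end

theorem lemma4p9:
  fixes b :: nat and as ls :: "nat list"
  assumes "b > 0"
    and "length ls = length as"
    and "as \<noteq> []"
    and "\<forall>a\<in>set as. 0 < a"
  shows "\<exists>m::nat. \<forall>c :: (nat \<rightharpoonup> nat) list \<Rightarrow> nat.
           (\<forall>s. admissible as ls m s \<longrightarrow> c s < b) \<longrightarrow>
           (\<exists>ps :: (nat \<rightharpoonup> nat) list. length ps = length as \<and>
              (\<forall>i<length as. propP (as!i) (ls!i) m (ps!i)) \<and>
              (\<forall>x < ls!0. \<exists>col. \<forall>rs :: (nat \<rightharpoonup> nat) list.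
                  length rs = length as \<and>
                  sealed_rigid_surj (as!0) x (rs!0) \<and>
                  (\<forall>i. 1 \<le> i \<and> i < length as \<longrightarrow> rigid_surj (as!i) (ls!i) (rs!i))
                  \<longrightarrow> c (map (\<lambda>i. if i = 0 then rs!0 \<circ>\<^sub>m p_up (as!0) (ps!0) x
                                  else rs!i \<circ>\<^sub>m ps!i) [0..<length as]) = col))"
proof -
  interpret tuple_layout as ls
    using assms(2-4) by unfold_locales
  let ?D = "length as * block_len"
  obtain Nf where Nf: "product_ramsey alphabet ?D 1 b Nf"
    using hales_jewett_product alphabet_pos by blast
  define m where "m = (\<Sum>j<?D. Nf j) + 1"
  have lengths: "\<forall>j<?D. Nf j < m"
    unfolding m_def by (simp add: less_Suc_eq_le member_le_sum)
  show ?thesis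
  proof (intro exI[of _ m] allI impI)
    fix c assume c: "\<forall>s. admissible as ls m s \<longrightarrow> c s < b"
    obtain W SS where lines: "\<forall>j<?D. comb_line (alphabet j) (Nf j) (W j) (SS j)"
      and const: "\<forall>x<?D. constant_on_product alphabet ?D W SS (induced_coloring m c x (Min (SS x)))"
      using Nf[unfolded product_ramsey_def, rule_format, of "\<lambda>_. 0" "induced_coloring m c"]
        induced_coloring_less[OF assms(1) c] induced_coloring_prefix_determined by auto
    from line_maps_solution[OF lines lengths const]
    show "\<exists>ps. length ps = length as \<and> (\<forall>i<length as. propP (as!i) (ls!i) m (ps!i)) \<and>
        (\<forall>x < ls!0. \<exists>col. \<forall>rs. length rs = length as \<and> sealed_rigid_surj (as!0) x (rs!0) \<and>
           (\<forall>i. 1 \<le> i \<and> i < length as \<longrightarrow> rigid_surj (as!i) (ls!i) (rs!i))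
           \<longrightarrow> c (map (\<lambda>i. if i = 0 then rs!0 \<circ>\<^sub>m p_up (as!0) (ps!0) x
                           else rs!i \<circ>\<^sub>m ps!i) [0..<length as]) = col)"
      by blast
  qed
qed

end
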